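(* Let $f:\mathbb{R}^n\to\mathbb{R}$ be bounded, $\lambda>0$, $h>0$. On the grid $h\mathbb{Z}^n$ define $f_0(x_k)=f(x_k)$ and, for $i\ge1$, $$f_i(x_k)=\min\{f_{i-1}(x_k+rh)+\lambda h^2|r|^2\tau_i:\ r\in\mathbb{Z}^n,\ |r|_\infty\le1\},\qquad \tau_i=2i-1.$$ Then for every grid point $x_k\in h\mathbb{Z}^n$ and every $m=0,1,2,\dots$, $$f_m(x_k)=g_m(x_k):=\inf\{f(x_k+rh)+\lambda h^2|r|^2:\ r\in\mathbb{Z}^n,\ |r|_\infty\le m\}.$$
   Context: $|r|$ is the Euclidean norm and $|r|_\infty=\max_i|r_i|$ the maximum norm of $r\in\mathbb{Z}^n$. *)

theory Defs
  imports "HOL-Analysis.Analysis"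
begin

definition isqnorm :: "int ^ 'n :: finite \<Rightarrow> real" where
  "isqnorm r = (\<Sum>i\<in>UNIV. (real_of_int (r $ i))^2)"

definition imaxnorm :: "int ^ 'n :: finite \<Rightarrow> int" where
  "imaxnorm r = Max (range (\<lambda>i. \<bar>r $ i\<bar>))"

definition ivec :: "int ^ 'n :: finite \<Rightarrow> real ^ 'n" where
  "ivec r = (\<chi> i. real_of_int (r $ i))"

text \<open>The iterates f_i (evaluated at points of R^n; only grid points matter).\<close>
fun iter_f :: "(real ^ 'n :: finite \<Rightarrow> real) \<Rightarrow> real \<Rightarrow> real \<Rightarrow> nat \<Rightarrow> real ^ 'n \<Rightarrow> real" where
  "iter_f f lam h 0 x = f x"
| "iter_f f lam h (Suc i) x =
     Min {iter_f f lam h i (x + h *\<^sub>R ivec r) + lam * h^2 * isqnorm r * real (2 * Suc i - 1)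
          | r :: int ^ 'n. imaxnorm r \<le> 1}"

definition g_fun :: "(real ^ 'n :: finite \<Rightarrow> real) \<Rightarrow> real \<Rightarrow> real \<Rightarrow> nat \<Rightarrow> real ^ 'n \<Rightarrow> real" where
  "g_fun f lam h m x =
     Inf {f (x + h *\<^sub>R ivec r) + lam * h^2 * isqnorm r | r :: int ^ 'n. imaxnorm r \<le> int m}"

end

theory Submission
  imports Defs
begin

text \<open>The cube of radius \<open>i + 1\<close> is the Minkowski sum of the cubes of radii 1 and \<open>i\<close>.
  For \<open>\<bar>a\<bar> \<le> i\<close> and \<open>b \<in> {-1, 0, 1}\<close> we have \<open>2ab \<le> 2i\<bar>b\<bar> = 2ib\<^sup>2\<close>, hence
  \<open>(a + b)\<^sup>2 \<le> a\<^sup>2 + (2i + 1) b\<^sup>2\<close>, with equality when one unit is moved off every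
  coordinate of modulus \<open>i + 1\<close>. Summing over coordinates, the weighted minimum over the cube of
  radius \<open>i + 1\<close> equals the minimum over \<open>s\<close> in the unit cube of the weighted minimum over the
  cube of radius \<open>i\<close> around \<open>s\<close> plus \<open>(2i + 1) \<lambda> h\<^sup>2 \<bar>s\<bar>\<^sup>2\<close>, which is the recursion defining
  \<open>f\<^sub>i\<close>. All infima range over finite sets.\<close>

definition cube :: "nat \<Rightarrow> (int ^ 'n :: finite) set" where
  "cube m = {r. imaxnorm r \<le> int m}"

lemma mem_cube_iff: "r \<in> cube m \<longleftrightarrow> (\<forall>j. \<bar>r $ j\<bar> \<le> int m)"
  unfolding cube_def imaxnorm_def by (subst Max_le_iff) auto

lemma finite_cube: "finite (cube m)"
proof -
  have "cube m \<subseteq> vec_lambda ` (PiE UNIV (\<lambda>_. {- int m..int m}))"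
  proof
    fix r :: "int ^ 'n" assume "r \<in> cube m"
    then have "vec_nth r \<in> PiE UNIV (\<lambda>_. {- int m..int m})"
      by (simp add: mem_cube_iff PiE_iff abs_le_iff) (metis minus_le_iff)
    then show "r \<in> vec_lambda ` (PiE UNIV (\<lambda>_. {- int m..int m}))"
      by (metis image_eqI vec_nth_inverse)
  qed
  then show ?thesis
    by (rule finite_subset) (intro finite_imageI finite_PiE; simp)
qed

lemma cube_nonempty: "cube m \<noteq> {}"
proof -
  have "0 \<in> cube m" by (simp add: mem_cube_iff)
  then show ?thesis by blast
qed

lemma cube_0: "cube 0 = {0}"
  by (auto simp: mem_cube_iff vec_eq_iff)

lemma add_mem_cube: "s \<in> cube a \<Longrightarrow> r \<in> cube b \<Longrightarrow> s + r \<in> cube (a + b)"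
  unfolding mem_cube_iff by (metis abs_triangle_ineq add_mono order_trans of_nat_add vector_add_component)

lemma ivec_add: "ivec (r + s) = ivec r + ivec s"
  unfolding ivec_def by (simp add: vec_eq_iff)

lemma sq_add_le_weighted:
  fixes a b :: int
  assumes "\<bar>a\<bar> \<le> int i" "\<bar>b\<bar> \<le> 1"
  shows "(real_of_int (a + b))\<^sup>2 \<le> (real_of_int a)\<^sup>2 + real (2 * i + 1) * (real_of_int b)\<^sup>2"
proof -
  have "b \<in> {-1, 0, 1}" using assms(2) by auto
  moreover have "real_of_int \<bar>a\<bar> \<le> real i" using assms(1) by linarith
  ultimately show ?thesis by (auto simp: power2_eq_square algebra_simps abs_le_iff)
qed

lemma sq_split_weighted:
  fixes q :: int
  assumes "\<bar>q\<bar> \<le> int i + 1"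
  shows "\<exists>a b. q = a + b \<and> \<bar>a\<bar> \<le> int i \<and> \<bar>b\<bar> \<le> 1 \<and>
    (real_of_int a)\<^sup>2 + real (2 * i + 1) * (real_of_int b)\<^sup>2 = (real_of_int q)\<^sup>2"
proof (cases "\<bar>q\<bar> = int i + 1")
  case True
  then have "q = int i + 1 \<or> q = - int i - 1" by auto
  then have "(real_of_int (q - sgn q))\<^sup>2 + real (2 * i + 1) * (real_of_int (sgn q))\<^sup>2
      = (real_of_int q)\<^sup>2"
    by (auto simp: power2_eq_square algebra_simps)
  moreover have "\<bar>q - sgn q\<bar> \<le> int i" "\<bar>sgn q\<bar> \<le> 1"
    using True by (auto simp: sgn_if)
  ultimately show ?thesis by (metis diff_add_cancel)
next
  case False
  then show ?thesis using assms by (intro exI[of _ q] exI[of _ 0]) auto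
qed

lemma isqnorm_add_le:
  assumes "s \<in> cube 1" "r \<in> cube i"
  shows "isqnorm (s + r) \<le> isqnorm r + real (2 * i + 1) * isqnorm s"
  unfolding isqnorm_def sum_distrib_left sum.distrib[symmetric]
proof (rule sum_mono)
  fix j
  show "(real_of_int ((s + r) $ j))\<^sup>2
      \<le> (real_of_int (r $ j))\<^sup>2 + real (2 * i + 1) * (real_of_int (s $ j))\<^sup>2"
    using sq_add_le_weighted[of "r $ j" i "s $ j"] assms by (simp add: mem_cube_iff add.commute)
qed

lemma cube_Suc_split:
  assumes "q \<in> cube (Suc i)"
  obtains s r where "s \<in> cube 1" "r \<in> cube i" "q = s + r"
    "isqnorm q = isqnorm r + real (2 * i + 1) * isqnorm s"
proof -
  have "\<forall>j. \<exists>a b. q $ j = a + b \<and> \<bar>a\<bar> \<le> int i \<and> \<bar>b\<bar> \<le> 1 \<and>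
      (real_of_int a)\<^sup>2 + real (2 * i + 1) * (real_of_int b)\<^sup>2 = (real_of_int (q $ j))\<^sup>2"
    using assms by (intro allI sq_split_weighted) (simp add: mem_cube_iff add.commute)
  then obtain A B where AB: "\<And>j. q $ j = A j + B j \<and> \<bar>A j\<bar> \<le> int i \<and> \<bar>B j\<bar> \<le> 1 \<and>
      (real_of_int (A j))\<^sup>2 + real (2 * i + 1) * (real_of_int (B j))\<^sup>2 = (real_of_int (q $ j))\<^sup>2"
    by metis
  show thesis
  proof
    show "vec_lambda B \<in> cube 1" "vec_lambda A \<in> cube i" "q = vec_lambda B + vec_lambda A"
      using AB by (auto simp: mem_cube_iff vec_eq_iff)
    show "isqnorm q = isqnorm (vec_lambda A) + real (2 * i + 1) * isqnorm (vec_lambda B)"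
      unfolding isqnorm_def sum_distrib_left sum.distrib[symmetric] using AB by simp
  qed
qed

definition cube_min :: "(int ^ 'n :: finite \<Rightarrow> real) \<Rightarrow> real \<Rightarrow> nat \<Rightarrow> real" where
  "cube_min F c m = Min ((\<lambda>r. F r + c * isqnorm r) ` cube m)"

lemma cube_min_le: "r \<in> cube m \<Longrightarrow> cube_min F c m \<le> F r + c * isqnorm r"
  unfolding cube_min_def by (rule Min_le) (simp_all add: finite_cube)

lemma cube_min_attained:
  obtains r where "r \<in> cube m" "cube_min F c m = F r + c * isqnorm r"
proof -
  have "cube_min F c m \<in> (\<lambda>r. F r + c * isqnorm r) ` cube m"
    unfolding cube_min_def by (rule Min_in) (auto simp: finite_cube cube_nonempty)
  then show thesis using that by blast
qed

lemma cube_min_0: "cube_min F c 0 = F 0"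
  by (simp add: cube_min_def cube_0 isqnorm_def)

lemma cube_min_Suc:
  fixes F :: "int ^ 'n :: finite \<Rightarrow> real"
  assumes "c \<ge> 0"
  shows "cube_min F c (Suc i) =
    Min ((\<lambda>s. cube_min (\<lambda>r. F (s + r)) c i + c * isqnorm s * real (2 * i + 1)) ` cube 1)"
    (is "_ = Min (?step ` _)")
proof (rule antisym)
  show "cube_min F c (Suc i) \<le> Min (?step ` cube 1)"
  proof (rule Min.boundedI)
    show "finite (?step ` cube 1)" "?step ` cube 1 \<noteq> {}"
      by (simp_all add: finite_cube cube_nonempty)
    fix a assume "a \<in> ?step ` cube 1"
    then obtain s where s: "s \<in> cube 1" and a: "a = ?step s" by blast
    obtain r where r: "r \<in> cube i" and inner: "cube_min (\<lambda>r. F (s + r)) c i = F (s + r) + c * isqnorm r"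
      by (rule cube_min_attained)
    have "s + r \<in> cube (Suc i)" using add_mem_cube[OF s r] by simp
    then have "cube_min F c (Suc i) \<le> F (s + r) + c * isqnorm (s + r)" by (rule cube_min_le)
    also have "\<dots> \<le> F (s + r) + c * (isqnorm r + real (2 * i + 1) * isqnorm s)"
      using isqnorm_add_le[OF s r] assms by (simp add: mult_left_mono)
    also have "\<dots> = ?step s"
      unfolding inner by (simp add: algebra_simps)
    finally show "cube_min F c (Suc i) \<le> a" unfolding a .
  qed
next
  obtain q where q: "q \<in> cube (Suc i)" and outer: "cube_min F c (Suc i) = F q + c * isqnorm q"
    by (rule cube_min_attained)
  from q obtain s r where s: "s \<in> cube 1" and r: "r \<in> cube i" and "q = s + r"
    and norm_q: "isqnorm q = isqnorm r + real (2 * i + 1) * isqnorm s"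
    by (rule cube_Suc_split)
  have "Min (?step ` cube 1) \<le> ?step s"
    using s by (intro Min_le) (simp_all add: finite_cube)
  also have "\<dots> \<le> F (s + r) + c * isqnorm r + c * isqnorm s * real (2 * i + 1)"
    using cube_min_le[OF r, of "\<lambda>r. F (s + r)" c] by simp
  also have "\<dots> = cube_min F c (Suc i)"
    unfolding outer norm_q by (simp add: \<open>q = s + r\<close> algebra_simps)
  finally show "Min (?step ` cube 1) \<le> cube_min F c (Suc i)" .
qed

lemma iter_f_eq_cube_min:
  assumes "lam \<ge> 0"
  shows "iter_f f lam h m x = cube_min (\<lambda>r. f (x + h *\<^sub>R ivec r)) (lam * h\<^sup>2) m"
proof (induction m arbitrary: x)
  case 0
  show ?case by (simp add: cube_min_0 ivec_def zero_vec_def[symmetric])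
next
  case (Suc i)
  have step: "iter_f f lam h i (x + h *\<^sub>R ivec s) + lam * h\<^sup>2 * isqnorm s * real (2 * Suc i - 1)
      = cube_min (\<lambda>r. f (x + h *\<^sub>R ivec (s + r))) (lam * h\<^sup>2) i
        + lam * h\<^sup>2 * isqnorm s * real (2 * i + 1)" for s
    by (simp add: Suc.IH ivec_add scaleR_right_distrib add.assoc)
  have "iter_f f lam h (Suc i) x =
      Min ((\<lambda>s. cube_min (\<lambda>r. f (x + h *\<^sub>R ivec (s + r))) (lam * h\<^sup>2) i
                 + lam * h\<^sup>2 * isqnorm s * real (2 * i + 1)) ` cube 1)"
    unfolding iter_f.simps step setcompr_eq_image by (simp add: cube_def)
  also have "\<dots> = cube_min (\<lambda>r. f (x + h *\<^sub>R ivec r)) (lam * h\<^sup>2) (Suc i)"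
    using assms by (simp add: cube_min_Suc)
  finally show ?case .
qed

lemma g_fun_eq_cube_min:
  "g_fun f lam h m x = cube_min (\<lambda>r. f (x + h *\<^sub>R ivec r)) (lam * h\<^sup>2) m"
  unfolding g_fun_def cube_min_def cube_def[symmetric] setcompr_eq_image
  by (rule cInf_eq_Min) (auto simp: finite_cube cube_nonempty)

theorem theorem4p7:
  fixes f :: "real ^ 'n :: finite \<Rightarrow> real" and lam h :: real
  assumes "bounded (range f)" and "lam > 0" and "h > 0"
  shows "\<forall>(k :: int ^ 'n) (m :: nat).
           iter_f f lam h m (h *\<^sub>R ivec k) = g_fun f lam h m (h *\<^sub>R ivec k)"
  using \<open>lam > 0\<close> by (simp add: iter_f_eq_cube_min g_fun_eq_cube_min)

end
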